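(* Let $G$ be a $2$-connected series parallel graph which does not consist of a single edge. Then there exist vertices $s \neq t$ of $G$ such that $(G,s,t)$ is a TTSPG and \[(G,s,t) = (P_1,s,t)\,\|\,(P_2,s,t)\,\|\,(H,s,t),\] where $P_1$ and $P_2$ are paths (path subgraphs, with distinct edge sets) joining $s$ and $t$, and $H$ is a possibly empty subgraph of $G$ (empty meaning that the factor $(H,s,t)$ is absent) such that, when nonempty, $(H,s,t)$ is a TTSPG.
   Context: A graph $G=(V,E)$ has a finite vertex set $V$ and a finite multiset $E$ of unordered pairs of distinct vertices (multiple edges allowed, no loops). A path graph is a graph isomorphic to the graph with vertices $\{1,\dots,n\}$ and edges $\{i,i+1\}$, $i=1,\dots,n-1$; it joins its endpoints $1$ and $n$. A graph is $2$-connected if it is connected and deleting any single vertex (with its incident edges) leaves a connected graph. A two terminal graph (TTG) is a triple $(G,s,t)$ with $s\ne t$ vertices of $G$. The series composition is $(G_1,s_1,t_1)\circ(G_2,s_2,t_2) = (G_1\cup_{t_2\sim s_1} G_2, s_2, t_1)$ (disjoint union with $t_2$ and $s_1$ identified), and the parallel composition is $(G_1,s_1,t_1)\|(G_2,s_2,t_2) = (G_1\cup_{s_1\sim s_2,\,t_1\sim t_2}G_2, s_1,t_1)$ (disjoint union with $s_1,s_2$ identified and $t_1,t_2$ identified); parallel composition is commutative and associative. The class of two terminal series parallel graphs (TTSPGs) is the smallest class of TTGs containing $(K_2,s,t)$ (a single edge $\{s,t\}$) and closed under series and parallel composition. A graph $G$ is series parallel if $(G,s,t)$ is a TTSPG for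 some choice of $s,t$. *)

theory Defs
  imports Main
begin

text \<open>Multiple edges
  are distinct elements of E with the same endpoints. Subgraphs share the incidence
  function.\<close>

definition multigraph :: "('e \<Rightarrow> 'v set) \<Rightarrow> 'v set \<Rightarrow> 'e set \<Rightarrow> bool" where
  "multigraph inc V E \<longleftrightarrow> finite V \<and> finite E \<and>
     (\<forall>e\<in>E. inc e \<subseteq> V \<and> card (inc e) = 2)"

definition subgraph :: "('e \<Rightarrow> 'v set) \<Rightarrow> 'v set \<Rightarrow> 'e set \<Rightarrow> 'v set \<Rightarrow> 'e set \<Rightarrow> bool" where
  "subgraph inc V' E' V E \<longleftrightarrow> V' \<subseteq> V \<and> E' \<subseteq> E \<and> (\<forall>e\<in>E'. inc e \<subseteq> V')"

definition adj :: "('e \<Rightarrow> 'v set) \<Rightarrow> 'e set \<Rightarrow> ('v \<times> 'v) set" where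
  "adj inc E = {(u, v). \<exists>e\<in>E. inc e = {u, v}}"

definition connected_graph :: "('e \<Rightarrow> 'v set) \<Rightarrow> 'v set \<Rightarrow> 'e set \<Rightarrow> bool" where
  "connected_graph inc V E \<longleftrightarrow> V \<noteq> {} \<and> (\<forall>u\<in>V. \<forall>v\<in>V. (u, v) \<in> (adj inc E)\<^sup>*)"

definition two_connected :: "('e \<Rightarrow> 'v set) \<Rightarrow> 'v set \<Rightarrow> 'e set \<Rightarrow> bool" where
  "two_connected inc V E \<longleftrightarrow> connected_graph inc V E \<and>
     (\<forall>x\<in>V. connected_graph inc (V - {x}) {e\<in>E. x \<notin> inc e})"

text \<open>Two terminal series parallel graphs, realised intrinsically: (V,E,s,t) is a TTSPG
  iff it is a single edge from s to t, or it splits into two edge-disjoint subgraphs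
  meeting exactly in the identified vertices, each a TTSPG with the appropriate
  terminals (series: meeting in the middle vertex m; parallel: meeting in {s,t}).
  This is exactly the statement that (G,s,t) is isomorphic to a series resp.
  parallel composition of TTSPGs.\<close>
inductive ttspg :: "('e \<Rightarrow> 'v set) \<Rightarrow> 'v set \<Rightarrow> 'e set \<Rightarrow> 'v \<Rightarrow> 'v \<Rightarrow> bool"
  for inc :: "'e \<Rightarrow> 'v set" where
  single_edge: "s \<noteq> t \<Longrightarrow> inc e = {s, t} \<Longrightarrow> ttspg inc {s, t} {e} s t"
| series: "ttspg inc V1 E1 s m \<Longrightarrow> ttspg inc V2 E2 m t \<Longrightarrow> V1 \<inter> V2 = {m} \<Longrightarrow>
     E1 \<inter> E2 = {} \<Longrightarrow> ttspg inc (V1 \<union> V2) (E1 \<union> E2) s t"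
| parallel: "ttspg inc V1 E1 s t \<Longrightarrow> ttspg inc V2 E2 s t \<Longrightarrow> V1 \<inter> V2 = {s, t} \<Longrightarrow>
     E1 \<inter> E2 = {} \<Longrightarrow> ttspg inc (V1 \<union> V2) (E1 \<union> E2) s t"

definition series_parallel :: "('e \<Rightarrow> 'v set) \<Rightarrow> 'v set \<Rightarrow> 'e set \<Rightarrow> bool" where
  "series_parallel inc V E \<longleftrightarrow> (\<exists>s t. ttspg inc V E s t)"

definition path_joining :: "('e \<Rightarrow> 'v set) \<Rightarrow> 'v set \<Rightarrow> 'e set \<Rightarrow> 'v \<Rightarrow> 'v \<Rightarrow> bool" where
  "path_joining inc V' E' s t \<longleftrightarrow> (\<exists>vs es. vs \<noteq> [] \<and> distinct vs \<and> distinct es \<and>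
     hd vs = s \<and> last vs = t \<and> length es + 1 = length vs \<and>
     (\<forall>i < length es. inc (es ! i) = {vs ! i, vs ! Suc i}) \<and>
     set vs = V' \<and> set es = E')"

end

theory Submission
  imports Defs
begin

(* A 2-connected graph is no series composition (the middle vertex
   would be a cut vertex) and no single edge, so G = G1 || G2.  The key fact is that
   every TTSPG (V,E,s,t) is a path from s to t or has a "theta split": two internally
   disjoint a-b paths, meeting s,t at most in a,b, such that for every TTSPG X glued
   onto s,t in parallel, the rest of the graph (the paths minus their interiors)
   together with X is a TTSPG with terminals a,b -- the decomposition tree can be
   re-rooted at the parallel node joining the two paths.  This is proved by induction
   over TTSPGs: theta splits survive series and parallel composition, and two
   parallel paths form one.  For G = G1 || G2, a theta split of G1 re-rooted with
   X = G2 yields the decomposition at (a,b); if neither factor has one, both are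
   paths and H is empty. *)

section \<open>Basic facts on two terminal series parallel graphs\<close>

lemma ttspg_wellformed:
  assumes "ttspg inc V E s t"
  shows "s \<noteq> t" and "s \<in> V" and "t \<in> V" and "\<forall>e\<in>E. inc e \<subseteq> V"
  using assms by (induction rule: ttspg.induct) auto

(* Exchanging the terminals preserves being a TTSPG; needed to glue a graph
   "backwards" in series when re-rooting. *)
lemma ttspg_sym: "ttspg inc V E s t \<Longrightarrow> ttspg inc V E t s"
proof (induction rule: ttspg.induct)
  case (single_edge s t e)
  then show ?case by (metis ttspg.single_edge insert_commute)
next
  case (series V1 E1 s m V2 E2 t)
  have "ttspg inc (V2 \<union> V1) (E2 \<union> E1) t s"
    by (rule ttspg.series[OF series.IH(2,1)]) (use series.hyps in auto)
  then show ?case by (simp add: Un_commute)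
next
  case (parallel V1 E1 s t V2 E2)
  have "ttspg inc (V2 \<union> V1) (E2 \<union> E1) t s"
    by (rule ttspg.parallel[OF parallel.IH(2,1)]) (use parallel.hyps in auto)
  then show ?case by (simp add: Un_commute)
qed

(* A series composition is never 2-connected: deleting the middle vertex m
   separates s from t, since every edge avoiding m stays on its side of m. *)
lemma series_not_two_connected:
  assumes G1: "ttspg inc V1 E1 s m" and G2: "ttspg inc V2 E2 m t"
    and disjoint: "V1 \<inter> V2 = {m}" "E1 \<inter> E2 = {}"
  shows "\<not> two_connected inc (V1 \<union> V2) (E1 \<union> E2)"
proof
  assume "two_connected inc (V1 \<union> V2) (E1 \<union> E2)"
  moreover have "m \<in> V1 \<union> V2" "s \<in> V1 \<union> V2 - {m}" "t \<in> V1 \<union> V2 - {m}"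
    using ttspg_wellformed[OF G1] ttspg_wellformed[OF G2] by auto
  ultimately have "(s, t) \<in> (adj inc {e \<in> E1 \<union> E2. m \<notin> inc e})\<^sup>*"
    unfolding two_connected_def connected_graph_def by blast
  moreover have "y \<in> V1 - {m}" if "(s, y) \<in> (adj inc {e \<in> E1 \<union> E2. m \<notin> inc e})\<^sup>*" for y
    using that
  proof (induction rule: rtrancl_induct)
    case base
    show ?case using ttspg_wellformed[OF G1] by simp
  next
    case (step y z)
    then obtain e where e: "e \<in> E1 \<union> E2" "m \<notin> inc e" "inc e = {y, z}"
      unfolding adj_def by blast
    have "e \<notin> E2" using e step.IH disjoint(1) ttspg_wellformed(4)[OF G2] by blast
    then show ?case using e ttspg_wellformed(4)[OF G1] by auto
  qed
  ultimately have "t \<in> V1 - {m}" by blast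
  then show False using ttspg_wellformed[OF G2] disjoint(1) by auto
qed

section \<open>Paths\<close>

(* A walk is a vertex list together with the edge list joining consecutive
   vertices; this recursive form is the convenient one for induction. *)
fun walk :: "('e \<Rightarrow> 'v set) \<Rightarrow> 'v list \<Rightarrow> 'e list \<Rightarrow> bool" where
  "walk inc [v] [] \<longleftrightarrow> True"
| "walk inc (u # v # vs) (e # es) \<longleftrightarrow> inc e = {u, v} \<and> walk inc (v # vs) es"
| "walk inc _ _ \<longleftrightarrow> False"

lemma walk_iff_indexed:
  "walk inc vs es \<longleftrightarrow> vs \<noteq> [] \<and> length es + 1 = length vs \<and>
     (\<forall>i < length es. inc (es ! i) = {vs ! i, vs ! Suc i})"
proof (induction inc vs es rule: walk.induct)
  case (2 inc u v vs e es)
  then show ?case by (auto simp: All_less_Suc2)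
qed auto

lemma path_joining_walk:
  "path_joining inc V E s t \<longleftrightarrow> (\<exists>vs es. walk inc vs es \<and> distinct vs \<and> distinct es \<and>
     hd vs = s \<and> last vs = t \<and> set vs = V \<and> set es = E)"
  unfolding path_joining_def walk_iff_indexed by blast

lemma walk_append:
  "walk inc (vs1 @ [m]) es1 \<Longrightarrow> walk inc (m # vs2) es2 \<Longrightarrow>
   walk inc (vs1 @ m # vs2) (es1 @ es2)"
proof (induction vs1 arbitrary: es1)
  case Nil
  then show ?case by (cases es1) auto
next
  case (Cons u vs1)
  then show ?case by (cases vs1; cases es1) auto
qed

lemma walk_ttspg:
  "walk inc vs es \<Longrightarrow> distinct vs \<Longrightarrow> es \<noteq> [] \<Longrightarrow>
   ttspg inc (set vs) (set es) (hd vs) (last vs)"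
proof (induction inc vs es rule: walk.induct)
  case (2 inc u v vs e es)
  have uv: "u \<noteq> v" "inc e = {u, v}" using "2.prems" by auto
  note edge = ttspg.single_edge[of u v inc e, OF uv]
  show ?case
  proof (cases "es = []")
    case True
    then have "vs = []" using "2.prems"(1) by (cases vs) auto
    then show ?thesis using True edge by simp
  next
    case False
    then have rest: "ttspg inc (set (v # vs)) (set es) v (last (v # vs))"
      using "2.IH" "2.prems" by simp
    have "u \<notin> set (v # vs)" using "2.prems"(2) by simp
    then have "e \<notin> set es" using uv ttspg_wellformed(4)[OF rest] by blast
    then have "ttspg inc ({u, v} \<union> set (v # vs)) ({e} \<union> set es) u (last (v # vs))"
      by (intro ttspg.series[OF edge rest])
        (use \<open>u \<notin> set (v # vs)\<close> in auto)
    then show ?thesis by (simp add: insert_absorb)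
  qed
qed auto

lemma path_ttspg:
  assumes "path_joining inc V E a b" "a \<noteq> b"
  shows "ttspg inc V E a b"
proof -
  obtain vs es where p: "walk inc vs es" "distinct vs" "hd vs = a" "last vs = b"
    "set vs = V" "set es = E"
    using assms(1) unfolding path_joining_walk by blast
  have "es \<noteq> []"
  proof
    assume "es = []"
    then have "length vs = 1" using p(1) by (simp add: walk_iff_indexed)
    then have "hd vs = last vs" by (cases vs) auto
    then show False using p(3,4) assms(2) by simp
  qed
  then show ?thesis using walk_ttspg[OF p(1,2)] p by simp
qed

lemma path_single_edge:
  assumes "s \<noteq> t" "inc e = {s, t}"
  shows "path_joining inc {s, t} {e} s t"
  unfolding path_joining_walk
  by (rule exI[of _ "[s, t]"], rule exI[of _ "[e]"]) (use assms in auto)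

lemma path_concat:
  assumes p1: "path_joining inc V1 E1 s m" and p2: "path_joining inc V2 E2 m t"
    and disjoint: "V1 \<inter> V2 = {m}" "E1 \<inter> E2 = {}"
  shows "path_joining inc (V1 \<union> V2) (E1 \<union> E2) s t"
proof -
  obtain vs1 es1 where w1: "walk inc vs1 es1" "distinct vs1" "distinct es1"
    "hd vs1 = s" "last vs1 = m" "set vs1 = V1" "set es1 = E1"
    using p1 unfolding path_joining_walk by blast
  obtain vs2 es2 where w2: "walk inc vs2 es2" "distinct vs2" "distinct es2"
    "hd vs2 = m" "last vs2 = t" "set vs2 = V2" "set es2 = E2"
    using p2 unfolding path_joining_walk by blast
  define init where "init = butlast vs1"
  define tail where "tail = tl vs2"
  have "vs1 \<noteq> []" "vs2 \<noteq> []" using w1(1) w2(1) walk_iff_indexed by blast+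
  then have vs1: "vs1 = init @ [m]" and vs2: "vs2 = m # tail"
    using w1(5) w2(4) unfolding init_def tail_def
    by (metis append_butlast_last_id, metis list.collapse)
  have "walk inc (init @ m # tail) (es1 @ es2)"
    using walk_append w1(1) w2(1) vs1 vs2 by metis
  moreover have "distinct (init @ m # tail)"
    using w1(2,6) w2(2,6) disjoint(1) vs1 vs2 by auto
  moreover have "hd (init @ m # tail) = s" using w1(4) vs1 by (cases init) auto
  moreover have "last (init @ m # tail) = t" using w2(5) vs2 by simp
  moreover have "set (init @ m # tail) = V1 \<union> V2" using w1(6) w2(6) vs1 vs2 by auto
  ultimately show ?thesis
    unfolding path_joining_walk using w1(3,7) w2(3,7) disjoint(2)
    by (intro exI[of _ "init @ m # tail"] exI[of _ "es1 @ es2"]) auto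
qed

section \<open>Theta splits\<close>

definition path_pair :: "('e \<Rightarrow> 'v set) \<Rightarrow> 'v set \<Rightarrow> 'e set \<Rightarrow> 'v \<Rightarrow> 'v \<Rightarrow>
    'v set \<Rightarrow> 'e set \<Rightarrow> 'v set \<Rightarrow> 'e set \<Rightarrow> bool" where
  "path_pair inc V E a b VP1 EP1 VP2 EP2 \<longleftrightarrow> a \<noteq> b \<and>
     subgraph inc VP1 EP1 V E \<and> path_joining inc VP1 EP1 a b \<and>
     subgraph inc VP2 EP2 V E \<and> path_joining inc VP2 EP2 a b \<and>
     VP1 \<inter> VP2 = {a, b} \<and> EP1 \<inter> EP2 = {}"

lemma path_pair_mono:
  "path_pair inc V E a b VP1 EP1 VP2 EP2 \<Longrightarrow> V \<subseteq> V' \<Longrightarrow> E \<subseteq> E' \<Longrightarrow>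
   path_pair inc V' E' a b VP1 EP1 VP2 EP2"
  unfolding path_pair_def subgraph_def by auto

(* Quantifying over all such X is what lets the property be
   transported from a factor of a composition to the whole graph. *)
definition theta_split :: "('e \<Rightarrow> 'v set) \<Rightarrow> 'v set \<Rightarrow> 'e set \<Rightarrow> 'v \<Rightarrow> 'v \<Rightarrow> 'v \<Rightarrow> 'v \<Rightarrow>
    'v set \<Rightarrow> 'e set \<Rightarrow> 'v set \<Rightarrow> 'e set \<Rightarrow> bool" where
  "theta_split inc V E s t a b VP1 EP1 VP2 EP2 \<longleftrightarrow>
     path_pair inc V E a b VP1 EP1 VP2 EP2 \<and> {s, t} \<inter> (VP1 \<union> VP2) \<subseteq> {a, b} \<and>
     (\<forall>VC EC. ttspg inc VC EC s t \<and> VC \<inter> V = {s, t} \<and> EC \<inter> E = {} \<longrightarrow>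
        ttspg inc (V - (VP1 \<union> VP2) \<union> {a, b} \<union> VC) (E - (EP1 \<union> EP2) \<union> EC) a b)"

lemma theta_split_extend:
  assumes split: "theta_split inc V1 E1 s' t' a b VP1 EP1 VP2 EP2"
    and G1: "ttspg inc V1 E1 s' t'"
    and overlap: "V1 \<inter> V2 \<subseteq> {s', t'}" "E1 \<inter> E2 = {}" "{s, t} \<inter> V1 \<subseteq> {s', t'}"
    and enlarge: "\<And>VC EC. ttspg inc VC EC s t \<Longrightarrow> VC \<inter> (V1 \<union> V2) = {s, t} \<Longrightarrow>
      EC \<inter> (E1 \<union> E2) = {} \<Longrightarrow> ttspg inc (V2 \<union> VC) (E2 \<union> EC) s' t'"
  shows "theta_split inc (V1 \<union> V2) (E1 \<union> E2) s t a b VP1 EP1 VP2 EP2"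
proof -
  have paths: "path_pair inc V1 E1 a b VP1 EP1 VP2 EP2"
    and ends: "{s', t'} \<inter> (VP1 \<union> VP2) \<subseteq> {a, b}"
    and reroot: "\<And>VC EC. ttspg inc VC EC s' t' \<Longrightarrow> VC \<inter> V1 = {s', t'} \<Longrightarrow> EC \<inter> E1 = {} \<Longrightarrow>
      ttspg inc (V1 - (VP1 \<union> VP2) \<union> {a, b} \<union> VC) (E1 - (EP1 \<union> EP2) \<union> EC) a b"
    using split unfolding theta_split_def by blast+
  have inside: "VP1 \<union> VP2 \<subseteq> V1" "EP1 \<union> EP2 \<subseteq> E1"
    using paths unfolding path_pair_def subgraph_def by blast+
  have "ttspg inc (V1 \<union> V2 - (VP1 \<union> VP2) \<union> {a, b} \<union> VC) (E1 \<union> E2 - (EP1 \<union> EP2) \<union> EC) a b"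
    if X: "ttspg inc VC EC s t" "VC \<inter> (V1 \<union> V2) = {s, t}" "EC \<inter> (E1 \<union> E2) = {}" for VC EC
  proof -
    have X': "ttspg inc (V2 \<union> VC) (E2 \<union> EC) s' t'" using enlarge[OF X] .
    have rest: "(V2 \<union> VC) \<inter> V1 = {s', t'}"
      using overlap(1,3) X(2) ttspg_wellformed(2,3)[OF G1] ttspg_wellformed(2,3)[OF X'] by blast
    have "(E2 \<union> EC) \<inter> E1 = {}" using overlap(2) X(3) by blast
    with rest have "ttspg inc (V1 - (VP1 \<union> VP2) \<union> {a, b} \<union> (V2 \<union> VC))
        (E1 - (EP1 \<union> EP2) \<union> (E2 \<union> EC)) a b"
      using reroot[OF X'] by blast
    moreover have "(V2 \<union> VC) \<inter> (VP1 \<union> VP2) \<subseteq> {a, b}"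
      using rest ends inside(1) by blast
    then have "V1 - (VP1 \<union> VP2) \<union> {a, b} \<union> (V2 \<union> VC) = V1 \<union> V2 - (VP1 \<union> VP2) \<union> {a, b} \<union> VC"
      by blast
    moreover have "E1 - (EP1 \<union> EP2) \<union> (E2 \<union> EC) = E1 \<union> E2 - (EP1 \<union> EP2) \<union> EC"
      using overlap(2) inside(2) by blast
    ultimately show ?thesis by simp
  qed
  moreover have "{s, t} \<inter> (VP1 \<union> VP2) \<subseteq> {a, b}" using overlap(3) ends inside(1) by blast
  moreover have "path_pair inc (V1 \<union> V2) (E1 \<union> E2) a b VP1 EP1 VP2 EP2"
    by (rule path_pair_mono[OF paths]) auto
  ultimately show ?thesis unfolding theta_split_def by blast
qed

(* Theta splits of either factor are inherited by series and parallel
   compositions; in each case the rest of the composition enlarges the context. *)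
lemma theta_split_series_left:
  assumes G1: "ttspg inc V1 E1 s m" and G2: "ttspg inc V2 E2 m t"
    and disjoint: "V1 \<inter> V2 = {m}" "E1 \<inter> E2 = {}"
    and split: "theta_split inc V1 E1 s m a b VP1 EP1 VP2 EP2"
  shows "theta_split inc (V1 \<union> V2) (E1 \<union> E2) s t a b VP1 EP1 VP2 EP2"
proof (rule theta_split_extend[OF split G1])
  have "s \<notin> V2" "t \<notin> V1" using disjoint(1) ttspg_wellformed[OF G1] ttspg_wellformed[OF G2] by auto
  then show "{s, t} \<inter> V1 \<subseteq> {s, m}" by blast
  (* the context of G1 is G2 followed by X traversed backwards *)
  show "ttspg inc (V2 \<union> VC) (E2 \<union> EC) s m"
    if X: "ttspg inc VC EC s t" "VC \<inter> (V1 \<union> V2) = {s, t}" "EC \<inter> (E1 \<union> E2) = {}" for VC EC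
  proof -
    have "V2 \<inter> VC = {t}"
      using X(2) \<open>s \<notin> V2\<close> ttspg_wellformed[OF G2] ttspg_wellformed[OF X(1)] by auto
    then have "ttspg inc (V2 \<union> VC) (E2 \<union> EC) m s"
      using ttspg.series[OF G2 ttspg_sym[OF X(1)]] X(3) by blast
    then show ?thesis by (rule ttspg_sym)
  qed
qed (use disjoint in auto)

lemma theta_split_series_right:
  assumes G1: "ttspg inc V1 E1 s m" and G2: "ttspg inc V2 E2 m t"
    and disjoint: "V1 \<inter> V2 = {m}" "E1 \<inter> E2 = {}"
    and split: "theta_split inc V2 E2 m t a b VP1 EP1 VP2 EP2"
  shows "theta_split inc (V1 \<union> V2) (E1 \<union> E2) s t a b VP1 EP1 VP2 EP2"
proof -
  have "theta_split inc (V2 \<union> V1) (E2 \<union> E1) s t a b VP1 EP1 VP2 EP2"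
  proof (rule theta_split_extend[OF split G2])
    have "s \<notin> V2" "t \<notin> V1" using disjoint(1) ttspg_wellformed[OF G1] ttspg_wellformed[OF G2] by auto
    then show "{s, t} \<inter> V2 \<subseteq> {m, t}" by blast
    (* the context of G2 is X traversed backwards followed by G1 *)
    show "ttspg inc (V1 \<union> VC) (E1 \<union> EC) m t"
      if X: "ttspg inc VC EC s t" "VC \<inter> (V2 \<union> V1) = {s, t}" "EC \<inter> (E2 \<union> E1) = {}" for VC EC
    proof -
      have "V1 \<inter> VC = {s}"
        using X(2) \<open>t \<notin> V1\<close> ttspg_wellformed[OF G1] ttspg_wellformed[OF X(1)] by auto
      then show ?thesis using ttspg.series[OF ttspg_sym[OF G1] X(1)] X(3) by blast
    qed
  qed (use disjoint in auto)
  then show ?thesis by (simp add: Un_commute)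
qed

lemma theta_split_parallel:
  assumes G1: "ttspg inc V1 E1 s t" and G2: "ttspg inc V2 E2 s t"
    and disjoint: "V1 \<inter> V2 = {s, t}" "E1 \<inter> E2 = {}"
    and split: "theta_split inc V1 E1 s t a b VP1 EP1 VP2 EP2"
  shows "theta_split inc (V1 \<union> V2) (E1 \<union> E2) s t a b VP1 EP1 VP2 EP2"
proof (rule theta_split_extend[OF split G1])
  (* the context of G1 is G2 in parallel with X *)
  show "ttspg inc (V2 \<union> VC) (E2 \<union> EC) s t"
    if X: "ttspg inc VC EC s t" "VC \<inter> (V1 \<union> V2) = {s, t}" "EC \<inter> (E1 \<union> E2) = {}" for VC EC
  proof -
    have "V2 \<inter> VC = {s, t}"
      using X(2) ttspg_wellformed[OF G2] ttspg_wellformed[OF X(1)] by blast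
    then show ?thesis using ttspg.parallel[OF G2 X(1)] X(3) by blast
  qed
qed (use disjoint in auto)

lemma parallel_paths_pair:
  assumes G1: "ttspg inc V1 E1 s t" and G2: "ttspg inc V2 E2 s t"
    and disjoint: "V1 \<inter> V2 = {s, t}" "E1 \<inter> E2 = {}"
    and paths: "path_joining inc V1 E1 s t" "path_joining inc V2 E2 s t"
  shows "path_pair inc (V1 \<union> V2) (E1 \<union> E2) s t V1 E1 V2 E2"
  using ttspg_wellformed[OF G1] ttspg_wellformed[OF G2] disjoint paths
  unfolding path_pair_def subgraph_def by blast

(* Two parallel paths between s and t form a theta split at (s,t): re-rooting is
   trivial since nothing but the paths is left. *)
lemma theta_split_two_paths:
  assumes G1: "ttspg inc V1 E1 s t" and G2: "ttspg inc V2 E2 s t"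
    and disjoint: "V1 \<inter> V2 = {s, t}" "E1 \<inter> E2 = {}"
    and paths: "path_joining inc V1 E1 s t" "path_joining inc V2 E2 s t"
  shows "theta_split inc (V1 \<union> V2) (E1 \<union> E2) s t s t V1 E1 V2 E2"
proof -
  have "ttspg inc (V1 \<union> V2 - (V1 \<union> V2) \<union> {s, t} \<union> VC) (E1 \<union> E2 - (E1 \<union> E2) \<union> EC) s t"
    if X: "ttspg inc VC EC s t" for VC EC
  proof -
    have "V1 \<union> V2 - (V1 \<union> V2) \<union> {s, t} \<union> VC = VC" using ttspg_wellformed[OF X] by blast
    then show ?thesis using X by simp
  qed
  moreover have "path_pair inc (V1 \<union> V2) (E1 \<union> E2) s t V1 E1 V2 E2"
    using parallel_paths_pair[OF assms] .
  ultimately show ?thesis unfolding theta_split_def by blast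
qed

lemma path_or_theta_split:
  "ttspg inc V E s t \<Longrightarrow> path_joining inc V E s t \<or>
     (\<exists>a b VP1 EP1 VP2 EP2. theta_split inc V E s t a b VP1 EP1 VP2 EP2)"
proof (induction rule: ttspg.induct)
  case (single_edge s t e)
  then show ?case by (intro disjI1 path_single_edge)
next
  case (series V1 E1 s m V2 E2 t)
  show ?case
  proof (cases "path_joining inc V1 E1 s m \<and> path_joining inc V2 E2 m t")
    case True
    then show ?thesis using path_concat[OF _ _ series.hyps(3,4)] by blast
  next
    case False
    then consider
      (left) a b VP1 EP1 VP2 EP2 where "theta_split inc V1 E1 s m a b VP1 EP1 VP2 EP2"
    | (right) a b VP1 EP1 VP2 EP2 where "theta_split inc V2 E2 m t a b VP1 EP1 VP2 EP2"
      using series.IH by blast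
    then show ?thesis
      by cases (blast dest: theta_split_series_left[OF series.hyps]
        theta_split_series_right[OF series.hyps])+
  qed
next
  case (parallel V1 E1 s t V2 E2)
  consider
    (left) a b VP1 EP1 VP2 EP2 where "theta_split inc V1 E1 s t a b VP1 EP1 VP2 EP2"
  | (right) a b VP1 EP1 VP2 EP2 where "theta_split inc V2 E2 s t a b VP1 EP1 VP2 EP2"
  | (paths) "path_joining inc V1 E1 s t" "path_joining inc V2 E2 s t"
    using parallel.IH by blast
  then show ?case
  proof cases
    case (left a b VP1 EP1 VP2 EP2)
    then show ?thesis using theta_split_parallel[OF parallel.hyps] by blast
  next
    case (right a b VP1 EP1 VP2 EP2)
    have "V2 \<inter> V1 = {s, t}" "E2 \<inter> E1 = {}" using parallel.hyps(3,4) by auto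
    from theta_split_parallel[OF parallel.hyps(2,1) this right]
    have "theta_split inc (V1 \<union> V2) (E1 \<union> E2) s t a b VP1 EP1 VP2 EP2"
      by (simp only: Un_commute)
    then show ?thesis by blast
  next
    case paths
    then show ?thesis using theta_split_two_paths[OF parallel.hyps] by blast
  qed
qed

section \<open>The decomposition\<close>

definition path_path_decomposition :: "('e \<Rightarrow> 'v set) \<Rightarrow> 'v set \<Rightarrow> 'e set \<Rightarrow> 'v \<Rightarrow> 'v \<Rightarrow>
    'v set \<Rightarrow> 'e set \<Rightarrow> 'v set \<Rightarrow> 'e set \<Rightarrow> 'v set \<Rightarrow> 'e set \<Rightarrow> bool" where
  "path_path_decomposition inc V E s t VP1 EP1 VP2 EP2 VH EH \<longleftrightarrow>
     ttspg inc V E s t \<and> path_pair inc V E s t VP1 EP1 VP2 EP2 \<and>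
     subgraph inc VH EH V E \<and> ((VH = {} \<and> EH = {}) \<or> ttspg inc VH EH s t) \<and>
     V = VP1 \<union> VP2 \<union> VH \<and> E = EP1 \<union> EP2 \<union> EH \<and>
     VH \<inter> (VP1 \<union> VP2) \<subseteq> {s, t} \<and> EH \<inter> (EP1 \<union> EP2) = {}"

(* If G1 has a theta split at (a,b), then G1 || G2 decomposes at (a,b), with H the
   rest of G1 together with G2: re-rooting with the context G2 shows H is a TTSPG. *)
lemma decomposition_of_theta_split:
  assumes G1: "ttspg inc V1 E1 s t" and G2: "ttspg inc V2 E2 s t"
    and disjoint: "V1 \<inter> V2 = {s, t}" "E1 \<inter> E2 = {}"
    and split: "theta_split inc V1 E1 s t a b VP1 EP1 VP2 EP2"
  defines "VH \<equiv> V1 - (VP1 \<union> VP2) \<union> {a, b} \<union> V2"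
    and "EH \<equiv> E1 - (EP1 \<union> EP2) \<union> E2"
  shows "path_path_decomposition inc (V1 \<union> V2) (E1 \<union> E2) a b VP1 EP1 VP2 EP2 VH EH"
proof -
  have paths: "path_pair inc V1 E1 a b VP1 EP1 VP2 EP2"
    and ends: "{s, t} \<inter> (VP1 \<union> VP2) \<subseteq> {a, b}"
    and reroot: "\<And>VC EC. ttspg inc VC EC s t \<Longrightarrow> VC \<inter> V1 = {s, t} \<Longrightarrow> EC \<inter> E1 = {} \<Longrightarrow>
      ttspg inc (V1 - (VP1 \<union> VP2) \<union> {a, b} \<union> VC) (E1 - (EP1 \<union> EP2) \<union> EC) a b"
    using split unfolding theta_split_def by blast+
  have ab: "a \<noteq> b" and inside: "VP1 \<union> VP2 \<subseteq> V1" "EP1 \<union> EP2 \<subseteq> E1"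
    and P1: "path_joining inc VP1 EP1 a b" and P2: "path_joining inc VP2 EP2 a b"
    and P12: "VP1 \<inter> VP2 = {a, b}" "EP1 \<inter> EP2 = {}"
    using paths unfolding path_pair_def subgraph_def by blast+
  have H: "ttspg inc VH EH a b"
    unfolding VH_def EH_def using reroot[OF G2] disjoint by blast
  have P: "ttspg inc (VP1 \<union> VP2) (EP1 \<union> EP2) a b"
    using ttspg.parallel[OF path_ttspg[OF P1 ab] path_ttspg[OF P2 ab] P12] .
  have meet: "VH \<inter> (VP1 \<union> VP2) \<subseteq> {a, b}"
    unfolding VH_def using ends inside(1) disjoint(1) by blast
  have ab_in: "a \<in> VP1 \<union> VP2" "b \<in> VP1 \<union> VP2" "a \<in> VH" "b \<in> VH"
    using P12(1) unfolding VH_def by blast+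
  have V: "V1 \<union> V2 = VP1 \<union> VP2 \<union> VH" unfolding VH_def using inside(1) ab_in(1,2) by blast
  have E: "E1 \<union> E2 = EP1 \<union> EP2 \<union> EH" unfolding EH_def using inside(2) by blast
  have E_disjoint: "EH \<inter> (EP1 \<union> EP2) = {}"
    unfolding EH_def using inside(2) disjoint(2) by blast
  have "ttspg inc (VP1 \<union> VP2 \<union> VH) (EP1 \<union> EP2 \<union> EH) a b"
    by (rule ttspg.parallel[OF P H]) (use meet ab_in E_disjoint in blast)+
  moreover have "subgraph inc VH EH (V1 \<union> V2) (E1 \<union> E2)"
    unfolding subgraph_def using ttspg_wellformed(4)[OF H] V E by blast
  moreover have "path_pair inc (V1 \<union> V2) (E1 \<union> E2) a b VP1 EP1 VP2 EP2"
    by (rule path_pair_mono[OF paths]) auto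
  ultimately show ?thesis
    unfolding path_path_decomposition_def using H V E meet E_disjoint by simp
qed

lemma decomposition_of_parallel:
  assumes G1: "ttspg inc V1 E1 s t" and G2: "ttspg inc V2 E2 s t"
    and disjoint: "V1 \<inter> V2 = {s, t}" "E1 \<inter> E2 = {}"
  shows "\<exists>a b VP1 EP1 VP2 EP2 VH EH.
    path_path_decomposition inc (V1 \<union> V2) (E1 \<union> E2) a b VP1 EP1 VP2 EP2 VH EH"
proof -
  consider
    (left) a b VP1 EP1 VP2 EP2 where "theta_split inc V1 E1 s t a b VP1 EP1 VP2 EP2"
  | (right) a b VP1 EP1 VP2 EP2 where "theta_split inc V2 E2 s t a b VP1 EP1 VP2 EP2"
  | (paths) "path_joining inc V1 E1 s t" "path_joining inc V2 E2 s t"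
    using path_or_theta_split[OF G1] path_or_theta_split[OF G2] by blast
  then show ?thesis
  proof cases
    case (left a b VP1 EP1 VP2 EP2)
    show ?thesis using decomposition_of_theta_split[OF assms left] by blast
  next
    case (right a b VP1 EP1 VP2 EP2)
    have "V2 \<inter> V1 = {s, t}" "E2 \<inter> E1 = {}" using disjoint by auto
    from decomposition_of_theta_split[OF G2 G1 this right]
    have "path_path_decomposition inc (V1 \<union> V2) (E1 \<union> E2) a b VP1 EP1 VP2 EP2
        (V2 - (VP1 \<union> VP2) \<union> {a, b} \<union> V1) (E2 - (EP1 \<union> EP2) \<union> E1)"
      by (simp only: Un_commute)
    then show ?thesis by blast
  next
    case paths
    have "path_path_decomposition inc (V1 \<union> V2) (E1 \<union> E2) s t V1 E1 V2 E2 {} {}"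
      unfolding path_path_decomposition_def subgraph_def
      using parallel_paths_pair[OF assms paths] ttspg.parallel[OF assms] by simp
    then show ?thesis by blast
  qed
qed

theorem mainTheorem1:
  fixes inc :: "'e \<Rightarrow> 'v set" and V :: "'v set" and E :: "'e set"
  assumes "multigraph inc V E"
    and "two_connected inc V E"
    and "series_parallel inc V E"
    and "\<not> (\<exists>e. E = {e} \<and> V = inc e)"
  shows "\<exists>s t VP1 EP1 VP2 EP2 VH EH. s \<noteq> t \<and> ttspg inc V E s t \<and>
     subgraph inc VP1 EP1 V E \<and> path_joining inc VP1 EP1 s t \<and>
     subgraph inc VP2 EP2 V E \<and> path_joining inc VP2 EP2 s t \<and>
     subgraph inc VH EH V E \<and> ((VH = {} \<and> EH = {}) \<or> ttspg inc VH EH s t) \<and>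
     V = VP1 \<union> VP2 \<union> VH \<and> E = EP1 \<union> EP2 \<union> EH \<and>
     VP1 \<inter> VP2 = {s, t} \<and> VH \<inter> (VP1 \<union> VP2) \<subseteq> {s, t} \<and>
     EP1 \<inter> EP2 = {} \<and> EH \<inter> (EP1 \<union> EP2) = {}"
proof -
  obtain s t where "ttspg inc V E s t" using assms(3) unfolding series_parallel_def by blast
  then have "\<exists>a b VP1 EP1 VP2 EP2 VH EH. path_path_decomposition inc V E a b VP1 EP1 VP2 EP2 VH EH"
  proof (cases rule: ttspg.cases)
    case (single_edge e)
    then have "E = {e} \<and> V = inc e" by simp
    with assms(4) show ?thesis by blast
  next
    case (series V1 E1 m V2 E2)
    (* excluded: the middle vertex would be a cut vertex *)
    with series_not_two_connected[OF series(3-6)] assms(2) show ?thesis by simp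
  next
    case (parallel V1 E1 V2 E2)
    with decomposition_of_parallel[OF parallel(3-6)] show ?thesis by simp
  qed
  then show ?thesis unfolding path_path_decomposition_def path_pair_def by blast
qed

end
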